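(* Let $\Sigma=b^2M_nQ\Psi Q^\top M_n\in\mathbb R^{n\times n}$ be the steady-state covariance of the observables (notation in the context). Let $\psi_1=0$ be the eigenvalue of $\Sigma$ with eigenvector $\mathbf 1_n$, and let $\psi_2\le\dots\le\psi_n$ denote the remaining eigenvalues of $\Sigma$ (with multiplicity). Set $\tilde\psi_2=\psi_2(1-\frac1n)$ and $\tilde\psi_n=\psi_n(1-\frac1n)$. Then every diagonal entry $\sigma_i^2=\Sigma_{ii}$ satisfies $\tilde\psi_2\le\sigma_i^2\le\tilde\psi_n$ for all $i=1,\dots,n$.
   Context: $L$ is the Laplacian of a connected undirected simple graph with positive edge weights, $L=Q\Lambda Q^\top$, $Q=[q_1|\dots|q_n]$ orthogonal, $q_1=\mathbf 1_n/\sqrt n$, $\Lambda=\mathrm{diag}(0,\lambda_2,\dots,\lambda_n)$ with $0<\lambda_2\le\dots\le\lambda_n$; the delay satisfies $0\le\tau<\pi/(2\lambda_n)$; $b\neq0$; $M_n=I_n-\frac1n\mathbf 1_n\mathbf 1_n^\top$; $\Psi=\mathrm{diag}(0,\psi(\lambda_2),\dots,\psi(\lambda_n))$ with $\psi(\lambda)=\frac{\cos(\lambda\tau)}{2\lambda(1-\sin(\lambda\tau))}$. *)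

theory Defs
  imports "Jordan_Normal_Form.Char_Poly"
begin

text \<open>Undirected simple graph on vertices 0..n-1 with positive edge weights:
  w i j > 0 iff {i,j} is an edge, w i j = 0 otherwise.\<close>
definition weighted_simple_graph :: "nat \<Rightarrow> (nat \<Rightarrow> nat \<Rightarrow> real) \<Rightarrow> bool" where
  "weighted_simple_graph n w \<longleftrightarrow>
     (\<forall>i<n. w i i = 0) \<and> (\<forall>i<n. \<forall>j<n. w i j = w j i \<and> w i j \<ge> 0)"

definition graph_connected :: "nat \<Rightarrow> (nat \<Rightarrow> nat \<Rightarrow> real) \<Rightarrow> bool" where
  "graph_connected n w \<longleftrightarrow>
     (\<forall>i<n. \<forall>j<n. (i, j) \<in> {(a, b). a < n \<and> b < n \<and> w a b > 0}\<^sup>*)"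

definition laplacian :: "nat \<Rightarrow> (nat \<Rightarrow> nat \<Rightarrow> real) \<Rightarrow> real mat" where
  "laplacian n w = mat n n (\<lambda>(i, j). if i = j then (\<Sum>k<n. w i k) else - w i j)"

definition centering :: "nat \<Rightarrow> real mat" where
  "centering n = 1\<^sub>m n - mat n n (\<lambda>_. 1 / real n)"

definition psi :: "real \<Rightarrow> real \<Rightarrow> real" where
  "psi \<tau> l = cos (l * \<tau>) / (2 * l * (1 - sin (l * \<tau>)))"

end

theory Submission
  imports Defs
begin

(* Since Q is orthogonal with constant first column, every other column of Q sums to zero;
   as D = diag(0, psi(lambda_2), ...) kills the first column, the centering matrix fixes
   Q D Q^T on both sides and Sigma = Q (b^2 D) Q^T.  So column k >= 2 of Q is an eigenvector of
   Sigma for b^2 psi(lambda_k) > 0, which must therefore be one of the nonzero roots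
   psi_2, ..., psi_n of the characteristic polynomial.  Finally Sigma_ii is the combination
   sum_{k >= 2} Q_ik^2 b^2 psi(lambda_k) of these roots with weights summing to
   1 - Q_i1^2 = 1 - 1/n. *)

lemma sorted_hd_le:
  assumes "sorted xs" "x \<in> set xs"
  shows "hd xs \<le> x"
  using assms by (cases xs) auto

lemma sorted_le_last:
  assumes "sorted xs" "x \<in> set xs"
  shows "x \<le> last xs"
proof -
  obtain ys z where "xs = ys @ [z]"
    using assms(2) by (metis empty_iff empty_set rev_exhaust)
  then show ?thesis
    using assms by (auto simp: sorted_append)
qed

lemma psi_pos:
  assumes "0 < l" "0 \<le> \<tau>" "l * \<tau> < pi / 2"
  shows "0 < psi \<tau> l"
proof -
  have "0 \<le> l * \<tau>"
    using assms by simp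
  then have cos_pos: "0 < cos (l * \<tau>)"
    using assms(3) pi_gt_zero by (intro cos_gt_zero_pi) linarith+
  have "sin (l * \<tau>) \<noteq> 1"
  proof
    assume "sin (l * \<tau>) = 1"
    then have "(cos (l * \<tau>))\<^sup>2 = 0"
      using sin_cos_squared_add[of "l * \<tau>"] by simp
    then show False
      using cos_pos by simp
  qed
  then have "sin (l * \<tau>) < 1"
    using sin_le_one[of "l * \<tau>"] by linarith
  then show ?thesis
    using assms(1) cos_pos unfolding psi_def by simp
qed

lemma psi_spectrum_pos:
  fixes lam :: "nat \<Rightarrow> real"
  assumes lam: "0 < lam 1" "\<And>i j. 1 \<le> i \<Longrightarrow> i \<le> j \<Longrightarrow> j < n \<Longrightarrow> lam i \<le> lam j"
    and tau: "0 \<le> \<tau>" "\<tau> < pi / (2 * lam (n - 1))"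
    and k: "0 < k" "k < n"
  shows "0 < psi \<tau> (lam k)"
proof -
  have "lam 1 \<le> lam k" "lam k \<le> lam (n - 1)"
    using k by (simp_all add: lam(2))
  then have lam_k: "0 < lam k" "lam k \<le> lam (n - 1)"
    using lam(1) by simp_all
  then have "lam k * \<tau> \<le> lam (n - 1) * \<tau>"
    using tau(1) by (simp add: mult_right_mono)
  also have "\<dots> < pi / 2"
    using tau(2) lam_k by (simp add: field_simps)
  finally show ?thesis
    by (rule psi_pos[OF lam_k(1) tau(1)])
qed

lemma index_centering_mult:
  assumes "A \<in> carrier_mat n m" "i < n" "j < m"
  shows "(centering n * A) $$ (i, j) = A $$ (i, j) - (\<Sum>l<n. A $$ (l, j)) / real n"
proof -
  have "(centering n * A) $$ (i, j)
      = (\<Sum>l<n. (if i = l then A $$ (l, j) else 0) - A $$ (l, j) / real n)"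
    using assms
    by (auto simp: centering_def scalar_prod_def lessThan_atLeast0 algebra_simps intro!: sum.cong)
  also have "\<dots> = A $$ (i, j) - (\<Sum>l<n. A $$ (l, j)) / real n"
    using assms(2) by (simp add: sum_subtractf sum_divide_distrib)
  finally show ?thesis .
qed

lemma transpose_centering [simp]: "(centering n)\<^sup>T = centering n"
  by (auto simp: centering_def)

lemma dim_centering [simp]: "dim_row (centering n) = n" "dim_col (centering n) = n"
  by (simp_all add: centering_def)

lemma centering_carrier [simp]: "centering n \<in> carrier_mat n n"
  by (simp add: carrier_matI)

lemma centering_mult_eq:
  assumes "A \<in> carrier_mat n m" "\<And>j. j < m \<Longrightarrow> (\<Sum>i<n. A $$ (i, j)) = 0"
  shows "centering n * A = A"
  using assms by (intro eq_matI) (auto simp: index_centering_mult simp del: index_mult_mat(1))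

lemma mult_centering_eq:
  assumes A: "A \<in> carrier_mat m n" and row_sums: "\<And>i. i < m \<Longrightarrow> (\<Sum>j<n. A $$ (i, j)) = 0"
  shows "A * centering n = A"
proof -
  have "(\<Sum>j<n. A\<^sup>T $$ (j, i)) = (\<Sum>j<n. A $$ (i, j))" if "i < m" for i
    using A that by (intro sum.cong) auto
  then have "(\<Sum>j<n. A\<^sup>T $$ (j, i)) = 0" if "i < m" for i
    using row_sums that by simp
  then have "centering n * A\<^sup>T = A\<^sup>T"
    using A by (intro centering_mult_eq) auto
  then have "(A * centering n)\<^sup>T = A\<^sup>T"
    using A by (simp add: transpose_mult[of _ m n _ n])
  then show ?thesis
    using arg_cong[of _ _ transpose_mat] by fastforce
qed

lemma orthogonal_col_sum_eq_0:
  fixes Q :: "'a :: field mat"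
  assumes Q: "Q \<in> carrier_mat n n" "Q\<^sup>T * Q = 1\<^sub>m n"
    and col0: "col Q 0 = vec n (\<lambda>_. c)" "c \<noteq> 0"
    and j: "0 < j" "j < n"
  shows "(\<Sum>i<n. Q $$ (i, j)) = 0"
proof -
  have Q0: "Q $$ (i, 0) = c" if "i < n" for i
    using arg_cong[OF col0(1), of "\<lambda>v. v $ i"] Q(1) j that by simp
  have "0 = (Q\<^sup>T * Q) $$ (0, j)"
    using Q j by simp
  also have "\<dots> = (\<Sum>i<n. Q $$ (i, 0) * Q $$ (i, j))"
    using Q(1) j by (simp add: scalar_prod_def lessThan_atLeast0)
  also have "\<dots> = c * (\<Sum>i<n. Q $$ (i, j))"
    by (auto simp: Q0 sum_distrib_left intro!: sum.cong)
  finally show ?thesis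
    using col0(2) by simp
qed

lemma index_conj_mat_diag:
  fixes Q :: "'a :: comm_ring_1 mat"
  assumes "Q \<in> carrier_mat n n" "i < n" "j < n"
  shows "(Q * mat_diag n e * Q\<^sup>T) $$ (i, j) = (\<Sum>k<n. Q $$ (i, k) * e k * Q $$ (j, k))"
proof -
  have "Q * mat_diag n e = mat n n (\<lambda>(i, k). Q $$ (i, k) * e k)"
    using assms(1) by (rule mat_diag_mult_right)
  then show ?thesis
    using assms by (simp add: scalar_prod_def lessThan_atLeast0)
qed

lemma conj_mat_diag_carrier [simp]:
  "Q \<in> carrier_mat n m \<Longrightarrow> Q * mat_diag m e * Q\<^sup>T \<in> carrier_mat n n"
  unfolding carrier_mat_def by simp

lemma conj_mat_diag_row_sum_eq_0:
  fixes Q :: "'a :: field mat"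
  assumes Q: "Q \<in> carrier_mat n n" "Q\<^sup>T * Q = 1\<^sub>m n"
    and col0: "col Q 0 = vec n (\<lambda>_. c)" "c \<noteq> 0"
    and "e 0 = 0" "i < n"
  shows "(\<Sum>j<n. (Q * mat_diag n e * Q\<^sup>T) $$ (i, j)) = 0"
proof -
  have "(\<Sum>j<n. (Q * mat_diag n e * Q\<^sup>T) $$ (i, j))
      = (\<Sum>j<n. \<Sum>k<n. Q $$ (i, k) * e k * Q $$ (j, k))"
    by (intro sum.cong refl index_conj_mat_diag[OF Q(1) \<open>i < n\<close>]) simp
  also have "\<dots> = (\<Sum>k<n. \<Sum>j<n. Q $$ (i, k) * e k * Q $$ (j, k))"
    by (rule sum.swap)
  also have "\<dots> = (\<Sum>k<n. Q $$ (i, k) * e k * (\<Sum>j<n. Q $$ (j, k)))"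
    by (simp add: sum_distrib_left)
  also have "\<dots> = 0"
  proof (intro sum.neutral ballI)
    fix k
    assume "k \<in> {..<n}"
    then show "Q $$ (i, k) * e k * (\<Sum>j<n. Q $$ (j, k)) = 0"
      using \<open>e 0 = 0\<close> orthogonal_col_sum_eq_0[OF Q col0, of k] by (cases "k = 0") auto
  qed
  finally show ?thesis .
qed

lemma centering_conj_mat_diag:
  fixes Q :: "real mat"
  assumes Q: "Q \<in> carrier_mat n n" "Q\<^sup>T * Q = 1\<^sub>m n"
    and col0: "col Q 0 = vec n (\<lambda>_. c)" "c \<noteq> 0"
    and "e 0 = 0"
  shows "centering n * Q * mat_diag n e * Q\<^sup>T * centering n = Q * mat_diag n e * Q\<^sup>T"
proof -
  let ?S = "Q * mat_diag n e * Q\<^sup>T"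
  have S: "?S \<in> carrier_mat n n"
    using Q(1) by simp
  have row_sums: "(\<Sum>j<n. ?S $$ (i, j)) = 0" if "i < n" for i
    using conj_mat_diag_row_sum_eq_0[of Q n c e i, OF Q col0 \<open>e 0 = 0\<close> that] .
  have sym: "?S $$ (i, j) = ?S $$ (j, i)" if "i < n" "j < n" for i j
    using that by (simp only: index_conj_mat_diag[OF Q(1)]) (simp add: mult_ac)
  have col_sums: "(\<Sum>i<n. ?S $$ (i, j)) = 0" if "j < n" for j
  proof -
    have "(\<Sum>i<n. ?S $$ (i, j)) = (\<Sum>i<n. ?S $$ (j, i))"
      by (rule sum.cong[OF refl], rule sym) (use that in auto)
    then show ?thesis
      using row_sums[OF that] by simp
  qed
  have QD: "Q * mat_diag n e \<in> carrier_mat n n"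
    using Q(1) by simp
  have "centering n * Q * mat_diag n e * Q\<^sup>T * centering n = centering n * ?S * centering n"
    using Q(1) by (simp only: assoc_mult_mat[OF centering_carrier Q(1) mat_diag_dim]
        assoc_mult_mat[OF centering_carrier QD transpose_carrier_mat[THEN iffD2]])
  also have "\<dots> = ?S"
    by (simp only: centering_mult_eq[OF S col_sums] mult_centering_eq[OF S row_sums])
  finally show ?thesis .
qed

lemma smult_conj_mat_diag:
  fixes Q :: "'a :: comm_ring_1 mat"
  assumes "Q \<in> carrier_mat n n"
  shows "c \<cdot>\<^sub>m (Q * mat_diag n e * Q\<^sup>T) = Q * mat_diag n (\<lambda>k. c * e k) * Q\<^sup>T"
  using assms
  by (intro eq_matI)
    (auto simp: index_conj_mat_diag sum_distrib_left mult_ac simp del: index_mult_mat(1) intro!: sum.cong)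

lemma eigenvector_conj_mat_diag:
  fixes Q :: "'a :: comm_ring_1 mat"
  assumes Q: "Q \<in> carrier_mat n n" "Q\<^sup>T * Q = 1\<^sub>m n" and k: "k < n"
  shows "eigenvector (Q * mat_diag n e * Q\<^sup>T) (col Q k) (e k)"
proof -
  have QD: "Q * mat_diag n e \<in> carrier_mat n n"
    using Q(1) by simp
  have S: "Q * mat_diag n e * Q\<^sup>T \<in> carrier_mat n n"
    using Q(1) by simp
  have "Q * mat_diag n e * Q\<^sup>T * Q = Q * mat_diag n e * (Q\<^sup>T * Q)"
    using QD Q(1) by (intro assoc_mult_mat[of _ n n]) simp_all
  also have "\<dots> = Q * mat_diag n e"
    using Q(2) right_mult_one_mat[OF QD] by simp
  finally have QDQ: "Q * mat_diag n e * Q\<^sup>T * Q = Q * mat_diag n e" .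
  have "Q * mat_diag n e * Q\<^sup>T *\<^sub>v col Q k = col (Q * mat_diag n e * Q\<^sup>T * Q) k"
    using col_mult2[OF S Q(1) k] ..
  also have "\<dots> = col (Q * mat_diag n e) k"
    by (simp only: QDQ)
  also have "\<dots> = e k \<cdot>\<^sub>v col Q k"
    using Q k by (auto simp: mat_diag_mult_right[of _ n n])
  finally have eigen: "Q * mat_diag n e * Q\<^sup>T *\<^sub>v col Q k = e k \<cdot>\<^sub>v col Q k" .
  have "col Q k \<bullet> col Q k = (Q\<^sup>T * Q) $$ (k, k)"
    using Q(1) k by simp
  also have "\<dots> = 1"
    using Q(2) k by simp
  finally have "col Q k \<bullet> col Q k = 1" .
  then have "col Q k \<noteq> 0\<^sub>v n"
    by auto
  then show ?thesis
    using eigen Q(1) by (simp add: eigenvector_def carrier_vecI)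
qed

lemma nonzero_eigenvalue_mem_roots:
  fixes A :: "'a :: field mat"
  assumes "A \<in> carrier_mat n n" "char_poly A = [:0, 1:] * (\<Prod>x\<leftarrow>xs. [:- x, 1:])"
    and "eigenvalue A \<mu>" "\<mu> \<noteq> 0"
  shows "\<mu> \<in> set xs"
proof -
  have "poly (char_poly A) \<mu> = 0"
    using assms eigenvalue_root_char_poly by blast
  then have "poly (\<Prod>x\<leftarrow>xs. [:- x, 1:]) \<mu> = 0"
    using assms(2,4) by simp
  then show ?thesis
    by (auto simp: poly_prod_list_zero_iff)
qed

lemma orthogonal_row_tail_sum_sq:
  fixes Q :: "real mat"
  assumes Q: "Q \<in> carrier_mat n n" "Q * Q\<^sup>T = 1\<^sub>m n"
    and col0: "col Q 0 = vec n (\<lambda>_. 1 / sqrt (real n))"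
    and i: "i < n"
  shows "(\<Sum>k\<in>{1..<n}. (Q $$ (i, k))\<^sup>2) = 1 - 1 / real n"
proof -
  have "(Q * Q\<^sup>T) $$ (i, i) = (\<Sum>k<n. (Q $$ (i, k))\<^sup>2)"
    using Q(1) i by (simp add: scalar_prod_def lessThan_atLeast0 power2_eq_square)
  then have "(\<Sum>k<n. (Q $$ (i, k))\<^sup>2) = 1"
    using Q(2) i by simp
  moreover have "(Q $$ (i, 0))\<^sup>2 = 1 / real n"
    using arg_cong[OF col0, of "\<lambda>v. v $ i"] Q(1) i by (simp add: power_divide)
  ultimately show ?thesis
    using i by (simp add: lessThan_atLeast0 sum.atLeast_Suc_lessThan)
qed

lemma diagonal_conj_mat_diag_bounds:
  fixes Q :: "real mat"
  assumes Q: "Q \<in> carrier_mat n n" "Q * Q\<^sup>T = 1\<^sub>m n"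
    and col0: "col Q 0 = vec n (\<lambda>_. 1 / sqrt (real n))"
    and e: "e 0 = 0" "\<And>k. 0 < k \<Longrightarrow> k < n \<Longrightarrow> lo \<le> e k \<and> e k \<le> hi"
    and i: "i < n"
  shows "lo * (1 - 1 / real n) \<le> (Q * mat_diag n e * Q\<^sup>T) $$ (i, i)
    \<and> (Q * mat_diag n e * Q\<^sup>T) $$ (i, i) \<le> hi * (1 - 1 / real n)"
proof -
  have n: "0 < n"
    using i by simp
  have weights: "(\<Sum>k\<in>{1..<n}. (Q $$ (i, k))\<^sup>2) = 1 - 1 / real n"
    using Q col0 i by (rule orthogonal_row_tail_sum_sq)
  have "(Q * mat_diag n e * Q\<^sup>T) $$ (i, i) = (\<Sum>k<n. e k * (Q $$ (i, k))\<^sup>2)"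
    using Q(1) i by (subst index_conj_mat_diag) (simp_all add: power2_eq_square mult_ac)
  also have "\<dots> = (\<Sum>k\<in>{1..<n}. e k * (Q $$ (i, k))\<^sup>2)"
    using n e(1) by (simp add: lessThan_atLeast0 sum.atLeast_Suc_lessThan)
  finally have entry: "(Q * mat_diag n e * Q\<^sup>T) $$ (i, i) = (\<Sum>k\<in>{1..<n}. e k * (Q $$ (i, k))\<^sup>2)" .
  have "lo * (1 - 1 / real n) = (\<Sum>k\<in>{1..<n}. lo * (Q $$ (i, k))\<^sup>2)"
    unfolding weights[symmetric] by (rule sum_distrib_left)
  also have "\<dots> \<le> (\<Sum>k\<in>{1..<n}. e k * (Q $$ (i, k))\<^sup>2)"
    using e(2) by (intro sum_mono mult_right_mono) auto
  moreover have "(\<Sum>k\<in>{1..<n}. e k * (Q $$ (i, k))\<^sup>2) \<le> (\<Sum>k\<in>{1..<n}. hi * (Q $$ (i, k))\<^sup>2)"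
    using e(2) by (intro sum_mono mult_right_mono) auto
  moreover have "\<dots> = hi * (1 - 1 / real n)"
    unfolding weights[symmetric] by (rule sum_distrib_left[symmetric])
  ultimately show ?thesis
    unfolding entry by simp
qed

theorem lemma9:
  fixes n :: nat and w :: "nat \<Rightarrow> nat \<Rightarrow> real" and Q :: "real mat"
    and lam :: "nat \<Rightarrow> real" and \<tau> b :: real and \<psi>s :: "real list"
  assumes n2: "n \<ge> 2"
    and graph: "weighted_simple_graph n w"
    and conn: "graph_connected n w"
    and Qcar: "Q \<in> carrier_mat n n"
    and Qorth: "Q\<^sup>T * Q = 1\<^sub>m n" "Q * Q\<^sup>T = 1\<^sub>m n"
    and Qcol1: "col Q 0 = vec n (\<lambda>_. 1 / sqrt (real n))"
    and eig: "laplacian n w = Q * mat_diag n lam * Q\<^sup>T"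
    and lam0: "lam 0 = 0"
    and lampos: "0 < lam 1"
    and lammono: "\<And>i j. 1 \<le> i \<Longrightarrow> i \<le> j \<Longrightarrow> j < n \<Longrightarrow> lam i \<le> lam j"
    and tau: "0 \<le> \<tau>" "\<tau> < pi / (2 * lam (n - 1))"
    and b: "b \<noteq> 0"
    and \<psi>s_len: "length \<psi>s = n - 1"
    and \<psi>s_sorted: "sorted \<psi>s"
    and \<psi>s_eig: "char_poly (b\<^sup>2 \<cdot>\<^sub>m (centering n * Q
                    * mat_diag n (\<lambda>k. if k = 0 then 0 else psi \<tau> (lam k))
                    * Q\<^sup>T * centering n))
                  = [:0, 1:] * (\<Prod>x\<leftarrow>\<psi>s. [:- x, 1:])"
  shows "\<forall>i<n.
     hd \<psi>s * (1 - 1 / real n) \<le> (b\<^sup>2 \<cdot>\<^sub>m (centering n * Q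
                    * mat_diag n (\<lambda>k. if k = 0 then 0 else psi \<tau> (lam k))
                    * Q\<^sup>T * centering n)) $$ (i, i)
   \<and> (b\<^sup>2 \<cdot>\<^sub>m (centering n * Q
                    * mat_diag n (\<lambda>k. if k = 0 then 0 else psi \<tau> (lam k))
                    * Q\<^sup>T * centering n)) $$ (i, i) \<le> last \<psi>s * (1 - 1 / real n)"
proof -
  define e where "e = (\<lambda>k. b\<^sup>2 * (if k = 0 then 0 else psi \<tau> (lam k)))"
  have col0: "col Q 0 = vec n (\<lambda>_. 1 / sqrt (real n))" "1 / sqrt (real n) \<noteq> 0"
    using Qcol1 n2 by auto
  have Sigma: "b\<^sup>2 \<cdot>\<^sub>m (centering n * Q * mat_diag n (\<lambda>k. if k = 0 then 0 else psi \<tau> (lam k))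
      * Q\<^sup>T * centering n) = Q * mat_diag n e * Q\<^sup>T"
    by (simp add: centering_conj_mat_diag[OF Qcar Qorth(1) col0] smult_conj_mat_diag[OF Qcar] e_def)
  have "e k \<in> set \<psi>s" if "0 < k" "k < n" for k
  proof (rule nonzero_eigenvalue_mem_roots)
    show "Q * mat_diag n e * Q\<^sup>T \<in> carrier_mat n n"
      using Qcar by simp
    show "char_poly (Q * mat_diag n e * Q\<^sup>T) = [:0, 1:] * (\<Prod>x\<leftarrow>\<psi>s. [:- x, 1:])"
      using \<psi>s_eig by (simp only: Sigma)
    show "eigenvalue (Q * mat_diag n e * Q\<^sup>T) (e k)"
      using eigenvector_conj_mat_diag[OF Qcar Qorth(1) \<open>k < n\<close>] by (auto simp: eigenvalue_def)
    show "e k \<noteq> 0"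
      using psi_spectrum_pos[OF lampos lammono tau that] b that by (simp add: e_def)
  qed
  then have bounds: "hd \<psi>s \<le> e k \<and> e k \<le> last \<psi>s" if "0 < k" "k < n" for k
    using that \<psi>s_sorted by (simp add: sorted_hd_le sorted_le_last)
  have "e 0 = 0"
    by (simp add: e_def)
  have "hd \<psi>s * (1 - 1 / real n) \<le> (Q * mat_diag n e * Q\<^sup>T) $$ (i, i)
      \<and> (Q * mat_diag n e * Q\<^sup>T) $$ (i, i) \<le> last \<psi>s * (1 - 1 / real n)" if "i < n" for i
    using diagonal_conj_mat_diag_bounds[of Q n e, OF Qcar Qorth(2) Qcol1 \<open>e 0 = 0\<close> bounds that] .
  then show ?thesis
    unfolding Sigma by blast
qed

end
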